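(* Let $\delta>0$, $r\in\mathbb{N}$, $r'\in(1,+\infty)$. Let $\overline{D}(\delta,r)=\{s\in\mathbb{C}:\min_{n\in\mathbb{N}}|s-n|\ge\delta,\ |s|\le r\}$. Then there is a constant $C>0$ depending only on $r,r',\delta$ such that for all $d\in\mathbb{C}$ with $\operatorname{Re}d\ge1/r'$ and $|d|\le r'$, all $s\in\overline{D}(\delta,r)$ and all $k\in\mathbb{N}_0$, \[ |\zeta(s-k,d)|\le C\Big(\frac{e^2}{2\pi}\Big)^kk!\,(k+1)^{r+1}(1+r'^{2k}). \]
   Context: $\zeta(s,d)=\sum_{n\ge0}(n+d)^{-s}$ is the Hurwitz zeta function, meromorphically continued in $s$; $\mathbb{N}=\{1,2,\dots\}$, $\mathbb{N}_0=\{0,1,\dots\}$. *)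

theory Defs
  imports "HOL-Complex_Analysis.Complex_Analysis"
begin

text \<open>Hurwitz zeta function zeta(s,d) = sum_{n>=0} (n+d)^(-s), meromorphically continued
  in s: for fixed d it is the unique function holomorphic on the complex plane minus {1}
  that agrees with the Dirichlet series for Re s > 1 (the value at the pole s = 1 is
  normalised to 0 only to make the function unique; it is never used).
  Relevant here only for Re d > 0, where the principal-branch powr is the standard choice.\<close>
definition hurwitz_zeta :: "complex \<Rightarrow> complex \<Rightarrow> complex" where
  "hurwitz_zeta s d =
     (THE f. f holomorphic_on (UNIV - {1}) \<and> f 1 = 0 \<and>
        (\<forall>z. 1 < Re z \<longrightarrow> f z = (\<Sum>n. (of_nat n + d) powr (- z)))) s"

definition Dbar :: "real \<Rightarrow> nat \<Rightarrow> complex set" where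
  "Dbar \<delta> r = {s. (\<forall>n::nat. n \<ge> 1 \<longrightarrow> \<delta> \<le> cmod (s - of_nat n)) \<and> cmod s \<le> real r}"

end

theory Submission
  imports Defs
begin

text \<open>Put D = d + 8. Expanding (x+1)^(1-w) = x^(1-w) (1 + 1/x)^(1-w) binomially at x = n + D and
  summing over n, the sum telescopes, and R(w) = zeta(w,D) - D^(1-w)/(w-1) satisfies
    R(w) = - sum_j (p_j(w) D^(-w-j) + b_j(w) R(w+j+1))
  with polynomial coefficients: the factor w+j of b_j cancels the pole of D^(-w-j)/(w+j).
  Since |b_j(w)| grows like 4^j while |D| >= 8, all series converge geometrically. The right-hand
  side only involves R to the right of w, so the identity continues R to an entire function, and
  zeta(w,d) = sum_(n<8) (n+d)^(-w) + D^(1-w)/(w-1) + R(w).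
  The same identity bounds R(s-k) by strong induction on k: as |b_j(s-k)| <= binom(k+r, j+1)/(j+2),
  the hypothesis R = O((k+r)!) makes the terms j < k contribute sum_(j<k) C (k+r)!/(j+2)!, at most
  3/4 C (k+r)!, while the other terms are bounded uniformly times 2^(-j). Finally
  (k+r)! <= r! (k+1)^r k!.\<close>

lemma norm_powr_le_exp_Im:
  fixes x y :: complex
  assumes "0 < Re x"
  shows "norm (x powr y) \<le> norm x powr Re y * exp (\<bar>Im y\<bar> * pi / 2)"
proof -
  have "x \<noteq> 0" using assms by auto
  then have "\<bar>Arg x\<bar> < pi / 2" using Re_Ln_pos_lt_imp[OF assms] Arg_eq_Im_Ln by simp
  have "- Im y * Arg x \<le> \<bar>Im y\<bar> * \<bar>Arg x\<bar>" by (simp add: abs_mult[symmetric])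
  also have "\<dots> \<le> \<bar>Im y\<bar> * (pi / 2)" using \<open>\<bar>Arg x\<bar> < pi / 2\<close> by (intro mult_left_mono) auto
  finally show ?thesis by (simp add: norm_powr_complex mult_left_mono)
qed

lemma norm_powr_le_pow_abs:
  fixes x y :: complex
  assumes "0 < Re x" and "1 \<le> b" and "1 / b \<le> norm x" and "norm x \<le> b"
  shows "norm (x powr y) \<le> b powr \<bar>Re y\<bar> * exp (\<bar>Im y\<bar> * pi / 2)"
proof -
  have x0: "0 < norm x" using assms(1) complex_Re_le_cmod less_le_trans by blast
  have "norm x powr Re y \<le> b powr \<bar>Re y\<bar>"
  proof (cases "1 \<le> norm x")
    case True
    have "norm x powr Re y \<le> norm x powr \<bar>Re y\<bar>" by (rule powr_mono[OF _ True]) simp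
    also have "\<dots> \<le> b powr \<bar>Re y\<bar>" by (rule powr_mono2) (use assms(4) in auto)
    finally show ?thesis .
  next
    case False
    have "norm x powr Re y \<le> norm x powr (- \<bar>Re y\<bar>)" by (rule powr_mono') (use False in auto)
    also have "\<dots> = (1 / norm x) powr \<bar>Re y\<bar>" by (simp add: powr_minus_divide powr_divide)
    also have "\<dots> \<le> b powr \<bar>Re y\<bar>"
      by (rule powr_mono2) (use x0 assms(2,3) in \<open>auto simp: field_simps\<close>)
    finally show ?thesis .
  qed
  then show ?thesis
    using norm_powr_le_exp_Im[OF assms(1), of y] by (meson exp_ge_zero mult_right_mono order_trans)
qed

lemma norm_powr_nat_minus_le:
  fixes x s :: complex
  assumes "0 < Re x" and "1 \<le> b" and "1 / b \<le> norm x" and "norm x \<le> b" and "norm s \<le> real r"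
  shows "norm (x powr (of_nat j - s)) \<le> b ^ (j + r) * exp (real r * pi / 2)"
proof -
  have "\<bar>Re (of_nat j - s)\<bar> \<le> real (j + r)" "\<bar>Im (of_nat j - s)\<bar> \<le> real r"
    using abs_Re_le_cmod[of s] abs_Im_le_cmod[of s] assms(5) by auto
  have "norm (x powr (of_nat j - s))
      \<le> b powr \<bar>Re (of_nat j - s)\<bar> * exp (\<bar>Im (of_nat j - s)\<bar> * pi / 2)"
    by (rule norm_powr_le_pow_abs[OF assms(1-4)])
  also have "\<dots> \<le> b powr real (j + r) * exp (real r * pi / 2)"
    using assms(2) \<open>\<bar>Re (of_nat j - s)\<bar> \<le> real (j + r)\<close> \<open>\<bar>Im (of_nat j - s)\<bar> \<le> real r\<close>
    by (intro mult_mono powr_mono) auto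
  also have "b powr real (j + r) = b ^ (j + r)" by (rule powr_realpow) (use assms(2) in simp)
  finally show ?thesis .
qed

lemma powr_mult_Re_pos:
  fixes x y a :: complex
  assumes "0 < Re x" and "0 < Re y"
  shows "(x * y) powr a = x powr a * y powr a"
proof -
  have x0: "x \<noteq> 0" and y0: "y \<noteq> 0" using assms by auto
  have "Ln (x * y) = Ln x + Ln y"
    using Re_Ln_pos_lt_imp[OF assms(1)] Re_Ln_pos_lt_imp[OF assms(2)] x0 y0
    by (intro Ln_times_simple) auto
  then show ?thesis using x0 y0 by (simp add: powr_def distrib_left exp_add)
qed

lemma powr_add_1_binomial_sums:
  fixes x a :: complex
  assumes "1 < Re x"
  shows "(\<lambda>n. (a gchoose n) * x powr (a - of_nat n)) sums (x + 1) powr a"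
proof -
  define z where "z = inverse x"
  have x0: "x \<noteq> 0" using assms by auto
  have "norm z < 1"
    using assms abs_Re_le_cmod[of x] by (simp add: z_def norm_inverse inverse_less_1_iff)
  then have binomial: "(\<lambda>n. (a gchoose n) * z ^ n) sums (1 + z) powr a" and "0 < Re (1 + z)"
    using gen_binomial_complex abs_Re_le_cmod[of z] by auto
  then have sum: "(x + 1) powr a = x powr a * (1 + z) powr a"
    using powr_mult_Re_pos[of x "1 + z" a] assms x0 by (simp add: z_def distrib_left)
  have "(a gchoose n) * x powr (a - of_nat n) = x powr a * ((a gchoose n) * z ^ n)" for n
    using x0 by (simp add: z_def powr_diff power_inverse field_simps)
  then show ?thesis unfolding sum by (simp only: sums_mult[OF binomial])
qed

lemma gbinomial_Suc_right:
  "(a :: 'a :: field_char_0) gchoose (Suc k) = (a gchoose k) * (a - of_nat k) / of_nat (Suc k)"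
  by (simp add: gbinomial_prod_rev prod.atLeast0_lessThan_Suc field_simps)

lemma norm_gbinomial_le_binomial:
  fixes z :: complex
  assumes "\<And>i. i < j \<Longrightarrow> norm (z - of_nat i) \<le> real m - real i" and "j \<le> m"
  shows "norm (z gchoose j) \<le> real (m choose j)"
  using assms
proof (induction j)
  case 0
  then show ?case by simp
next
  case (Suc j)
  have "norm (z gchoose Suc j) = norm (z gchoose j) * norm (z - of_nat j) / real (Suc j)"
    by (simp add: gbinomial_Suc_right norm_mult norm_divide del: of_nat_Suc)
  also have "\<dots> \<le> real (m choose j) * (real m - real j) / real (Suc j)"
    using Suc by (intro divide_right_mono mult_mono) auto
  also have "\<dots> = real (m choose Suc j)"
    by (simp add: binomial_gbinomial gbinomial_Suc_right of_nat_diff)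
  finally show ?case .
qed

lemma norm_gbinomial_le_pow:
  fixes z :: complex
  assumes "norm z \<le> real n"
  shows "norm (z gchoose j) \<le> 2 ^ n * 4 ^ j"
proof -
  have "norm (z gchoose j) \<le> real ((n + 2 * j) choose j)"
  proof (rule norm_gbinomial_le_binomial)
    fix i assume "i < j"
    have "norm (z - of_nat i) \<le> norm z + real i" by (metis norm_triangle_ineq4 norm_of_nat)
    then show "norm (z - of_nat i) \<le> real (n + 2 * j) - real i" using assms \<open>i < j\<close> by simp
  qed simp
  also have "\<dots> \<le> 2 ^ (n + 2 * j)"
    using binomial_le_pow2[of "n + 2 * j" j] by (metis of_nat_le_iff of_nat_numeral of_nat_power)
  also have "\<dots> = 2 ^ n * 4 ^ j" by (simp add: power_add power_mult)
  finally show ?thesis .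
qed

lemma pow_le_exp_mult_fact:
  assumes "0 \<le> (x :: real)"
  shows "x ^ n \<le> exp x * fact n"
proof -
  have s: "(\<lambda>n. x ^ n /\<^sub>R fact n) sums exp x" by (rule exp_converges)
  have "x ^ n /\<^sub>R fact n \<le> exp x"
    using sum_le_suminf[OF sums_summable[OF s], of "{n}"] assms s by (simp add: sums_iff)
  then show ?thesis by (simp add: divide_simps)
qed

lemma fact_add_le: "fact (k + r) \<le> fact r * real (k + 1) ^ r * (fact k :: real)"
proof (induction r)
  case 0
  then show ?case by simp
next
  case (Suc r)
  have "fact (k + Suc r) = real (k + r + 1) * (fact (k + r) :: real)" by simp
  also have "\<dots> \<le> (real (r + 1) * real (k + 1)) * (fact r * real (k + 1) ^ r * fact k)"
    by (intro mult_mono Suc.IH) (auto simp: algebra_simps)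
  also have "\<dots> = fact (Suc r) * real (k + 1) ^ Suc r * fact k" by (simp add: algebra_simps)
  finally show ?case .
qed

lemma sum_inverse_fact_Suc_Suc_le: "(\<Sum>j<k. 1 / fact (j + 2)) \<le> (3 / 4 :: real)"
proof -
  have inverse_fact_le: "1 / fact (j + 2) \<le> 1 / 2 * (1 / 3 :: real) ^ j" for j
  proof (induction j)
    case (Suc j)
    have "1 / fact (Suc j + 2) = 1 / real (j + 3) * (1 / fact (j + 2) :: real)"
      by (simp add: algebra_simps)
    also have "\<dots> \<le> 1 / 3 * (1 / 2 * (1 / 3) ^ j)"
      by (intro mult_mono Suc.IH) (auto simp: divide_simps)
    finally show ?case by simp
  qed simp
  have "(\<Sum>j<k. 1 / fact (j + 2)) \<le> (\<Sum>j<k. 1 / 2 * (1 / 3 :: real) ^ j)"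
    by (intro sum_mono inverse_fact_le)
  also have "\<dots> \<le> (\<Sum>j. 1 / 2 * (1 / 3 :: real) ^ j)"
    by (intro sum_le_suminf summable_mult summable_geometric) auto
  also have "\<dots> = 3 / 4"
    using suminf_mult[OF summable_geometric, of "1 / 3 :: real" "1 / 2"] suminf_geometric[of "1 / 3 :: real"]
    by simp
  finally show ?thesis .
qed

lemma two_pi_le_exp_2: "2 * pi \<le> exp (2 :: real)"
proof -
  have "27 / 10 \<le> exp (1 :: real)" using e_approx_32 by (simp add: abs_if split: if_split_asm)
  then have "27 / 10 * (27 / 10) \<le> exp (1 :: real) * exp 1" by (intro mult_mono) auto
  then have "729 / 100 \<le> exp (2 :: real)" by (simp add: exp_add[symmetric])
  then show ?thesis using pi_approx(2) by simp
qed

lemma sums_swap_dominated: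
  fixes f :: "nat \<Rightarrow> nat \<Rightarrow> complex"
  assumes bound: "\<And>n j. norm (f n j) \<le> a n * b j" and a: "summable a" and b: "summable b"
    and a0: "\<And>n. 0 \<le> a n" and b0: "\<And>j. 0 \<le> b j"
  shows "(\<lambda>n. \<Sum>j. f n j) sums (\<Sum>j. \<Sum>n. f n j)" and "summable (\<lambda>j. \<Sum>n. f n j)"
proof -
  have row_abs: "summable (\<lambda>j. norm (f n j))" for n
    by (rule summable_comparison_test[OF _ summable_mult[OF b, of "a n"]]) (use bound in auto)
  have col_abs: "summable (\<lambda>n. norm (f n j))" for j
    by (rule summable_comparison_test[OF _ summable_mult2[OF a, of "b j"]]) (use bound in auto)
  have row: "((\<lambda>j. f n j) has_sum (\<Sum>j. f n j)) UNIV" for n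
    by (rule norm_summable_imp_has_sum[OF row_abs summable_sums[OF summable_norm_cancel[OF row_abs]]])
  have col: "((\<lambda>n. f n j) has_sum (\<Sum>n. f n j)) UNIV" for j
    by (rule norm_summable_imp_has_sum[OF col_abs summable_sums[OF summable_norm_cancel[OF col_abs]]])
  have "(\<lambda>(n, j). a n * b j) summable_on UNIV \<times> UNIV"
    using a0 b0 sums_mult[OF summable_sums[OF b]] summable_mult2[OF a, of "suminf b"] suminf_nonneg[OF b b0]
    by (intro summable_on_SigmaI[where g = "\<lambda>n. a n * suminf b"])
       (auto intro: sums_nonneg_imp_has_sum simp: summable_on_UNIV_nonneg_real_iff)
  then have "(\<lambda>p. norm (case p of (n, j) \<Rightarrow> a n * b j)) summable_on UNIV \<times> UNIV"
    using a0 b0 by (simp add: case_prod_unfold abs_mult)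
  then have "(\<lambda>p. norm (case p of (n, j) \<Rightarrow> f n j)) summable_on UNIV \<times> UNIV"
    by (rule Infinite_Sum.abs_summable_on_comparison_test)
       (auto simp: case_prod_unfold abs_mult a0 b0 intro: order.trans[OF bound])
  then obtain S where S: "((\<lambda>(n, j). f n j) has_sum S) (UNIV \<times> UNIV)"
    using Infinite_Sum.abs_summable_summable by (auto simp: summable_on_def)
  have rows: "(\<lambda>n. \<Sum>j. f n j) sums S"
    using has_sum_Sigma'[OF S[unfolded case_prod_unfold]] row by (auto intro: has_sum_imp_sums)
  have swapped: "((\<lambda>(j, n). f n j) has_sum S) (UNIV \<times> UNIV)"
    using has_sum_swap[THEN iffD1, OF S] by (simp add: case_prod_unfold)
  have cols: "(\<lambda>j. \<Sum>n. f n j) sums S"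
    using has_sum_Sigma'[OF swapped[unfolded case_prod_unfold]] col by (auto intro: has_sum_imp_sums)
  show "summable (\<lambda>j. \<Sum>n. f n j)" using cols by (rule sums_summable)
  show "(\<lambda>n. \<Sum>j. f n j) sums (\<Sum>j. \<Sum>n. f n j)" using rows cols by (simp add: sums_iff)
qed

section \<open>The recursion for the Hurwitz series\<close>

definition hz_series :: "complex \<Rightarrow> complex \<Rightarrow> complex" where
  "hz_series D w = (\<Sum>n. (of_nat n + D) powr (- w))"

definition hz_pole :: "complex \<Rightarrow> complex \<Rightarrow> complex" where
  "hz_pole D w = D powr (1 - w) / (w - 1)"

text \<open>(1 - w) * shift_coeff j w is the coefficient of x^(-j-2) in the binomial series of
  (1 + 1/x)^(1-w); pole_coeff is shift_coeff with the factor -(w+j) removed.\<close>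
definition shift_coeff :: "nat \<Rightarrow> complex \<Rightarrow> complex" where
  "shift_coeff j w = ((- w) gchoose (Suc j)) / of_nat (Suc (Suc j))"

definition pole_coeff :: "nat \<Rightarrow> complex \<Rightarrow> complex" where
  "pole_coeff j w = - ((- w) gchoose j) / of_nat (Suc j * Suc (Suc j))"

lemma gbinomial_one_minus_Suc_Suc: "(1 - w) gchoose Suc (Suc j) = (1 - w) * shift_coeff j w"
proof -
  have "of_nat (Suc (Suc j)) * ((1 - w) gchoose Suc (Suc j)) = (1 - w) * ((1 - w - 1) gchoose Suc j)"
    by (rule gbinomial_absorption)
  then show ?thesis by (simp add: shift_coeff_def field_simps del: of_nat_Suc)
qed

lemma shift_coeff_sums:
  fixes x w :: complex
  assumes x: "1 < Re x" and w: "w \<noteq> 1"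
  shows "(\<lambda>j. shift_coeff j w * x powr (- w - of_nat (Suc j))) sums
           (x powr (1 - w) / (w - 1) - (x + 1) powr (1 - w) / (w - 1) - x powr (- w))"
proof -
  define f where "f n = ((1 - w) gchoose n) * x powr (1 - w - of_nat n)" for n
  have "f sums (x + 1) powr (1 - w)" unfolding f_def by (rule powr_add_1_binomial_sums[OF x])
  then have "(\<lambda>j. f (j + 2)) sums ((x + 1) powr (1 - w) - (x powr (1 - w) + (1 - w) * x powr (- w)))"
    using sums_iff_shift[of f 2] by (simp add: f_def numeral_2_eq_2)
  from sums_divide[OF this, of "1 - w"]
  have "(\<lambda>j. shift_coeff j w * x powr (- w - of_nat (Suc j))) sums
      (((x + 1) powr (1 - w) - (x powr (1 - w) + (1 - w) * x powr (- w))) / (1 - w))"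
  proof (rule sums_cong[THEN iffD1, rotated])
    fix j
    have "x powr (1 - w - of_nat (j + 2)) = x powr (- w - of_nat (Suc j))"
      by (rule arg_cong[where f = "\<lambda>e. x powr e"]) simp
    then show "f (j + 2) / (1 - w) = shift_coeff j w * x powr (- w - of_nat (Suc j))"
      using w unfolding f_def by (simp add: gbinomial_one_minus_Suc_Suc numeral_2_eq_2 del: of_nat_Suc)
  qed
  moreover have "(A - (B + u * C)) / u = B / (- u) - A / (- u) - C" if "u \<noteq> 0" for A B C u :: complex
    using that by (simp add: field_simps)
  ultimately show ?thesis using w by (simp add: minus_diff_eq)
qed

lemma norm_powr_shift_le:
  fixes D y :: complex
  assumes D: "8 \<le> Re D" and y: "Re y \<le> 0"
  shows "norm ((of_nat n + D) powr y) \<le> (real n + 8) powr Re y * exp (\<bar>Im y\<bar> * pi / 2)"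
proof -
  have "real n + 8 \<le> norm (of_nat n + D)"
    using D complex_Re_le_cmod[of "of_nat n + D"] by simp
  then have "norm (of_nat n + D) powr Re y \<le> (real n + 8) powr Re y"
    using y by (intro powr_mono2') auto
  then have "norm (of_nat n + D) powr Re y * exp (\<bar>Im y\<bar> * pi / 2)
      \<le> (real n + 8) powr Re y * exp (\<bar>Im y\<bar> * pi / 2)"
    by (rule mult_right_mono) simp
  moreover have "norm ((of_nat n + D) powr y) \<le> norm (of_nat n + D) powr Re y * exp (\<bar>Im y\<bar> * pi / 2)"
    by (rule norm_powr_le_exp_Im) (use D in simp)
  ultimately show ?thesis by linarith
qed

lemma summable_shifted_powr:
  assumes "1 < \<sigma>"
  shows "summable (\<lambda>n. (real n + 8) powr (- \<sigma>))"
proof -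
  have "summable (\<lambda>n. real (n + 8) powr (- \<sigma>))"
    using summable_iff_shift[where f = "\<lambda>n. real n powr (- \<sigma>)" and k = 8] assms
    by (simp add: summable_real_powr_iff)
  then show ?thesis by simp
qed

lemma summable_hz_series:
  assumes "8 \<le> Re D" and "1 < Re w"
  shows "summable (\<lambda>n. (of_nat n + D) powr (- w))"
proof (rule summable_norm_cancel, rule summable_comparison_test)
  show "summable (\<lambda>n. (real n + 8) powr (- Re w) * exp (\<bar>Im w\<bar> * pi / 2))"
    by (intro summable_mult2 summable_shifted_powr assms(2))
  show "\<exists>N. \<forall>n\<ge>N. norm (norm ((of_nat n + D) powr (- w)))
      \<le> (real n + 8) powr (- Re w) * exp (\<bar>Im w\<bar> * pi / 2)"
    using norm_powr_shift_le[OF assms(1), of "- w"] assms(2) by auto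
qed

lemma hz_pole_shift_tendsto_0:
  assumes D: "8 \<le> Re D" and w: "1 < Re w"
  shows "(\<lambda>n. hz_pole (of_nat n + D) w) \<longlonglongrightarrow> 0"
proof (rule Lim_null_comparison)
  let ?E = "exp (\<bar>Im w\<bar> * pi / 2) / norm (w - 1)"
  show "\<forall>\<^sub>F n in sequentially. norm (hz_pole (of_nat n + D) w) \<le> (real n + 8) powr (1 - Re w) * ?E"
    using norm_powr_shift_le[OF D, of "1 - w"] w
    by (intro always_eventually allI) (simp add: hz_pole_def norm_divide divide_right_mono)
  have "filterlim (\<lambda>n. real n + 8) at_top sequentially"
    using filterlim_tendsto_add_at_top[OF tendsto_const filterlim_real_sequentially, of 8]
    by (simp add: add.commute)
  then have "(\<lambda>n. (real n + 8) powr (1 - Re w)) \<longlonglongrightarrow> 0"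
    by (rule tendsto_neg_powr[rotated]) (use w in simp)
  then show "(\<lambda>n. (real n + 8) powr (1 - Re w) * ?E) \<longlonglongrightarrow> 0"
    by (rule tendsto_mult_left_zero)
qed

lemma norm_shift_coeff_le:
  assumes "norm w \<le> real \<rho>"
  shows "norm (shift_coeff j w) \<le> 2 ^ \<rho> * 4 ^ Suc j"
proof -
  have "norm (shift_coeff j w) \<le> norm ((- w) gchoose Suc j)"
    by (simp add: shift_coeff_def norm_divide divide_le_eq mult_le_cancel_left1 del: of_nat_Suc)
  also have "\<dots> \<le> 2 ^ \<rho> * 4 ^ Suc j" by (rule norm_gbinomial_le_pow) (use assms in simp)
  finally show ?thesis .
qed

lemma norm_pole_coeff_le:
  assumes "norm w \<le> real \<rho>"
  shows "norm (pole_coeff j w) \<le> 2 ^ \<rho> * 4 ^ j"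
proof -
  have "norm (pole_coeff j w) \<le> norm ((- w) gchoose j)"
    by (simp add: pole_coeff_def norm_divide divide_le_eq mult_le_cancel_left1 del: of_nat_Suc)
  also have "\<dots> \<le> 2 ^ \<rho> * 4 ^ j" by (rule norm_gbinomial_le_pow) (use assms in simp)
  finally show ?thesis .
qed

lemma norm_shift_term_powr_le:
  assumes D: "8 \<le> Re D" and w: "1 < Re w" "norm w \<le> real \<rho>"
  shows "norm (shift_coeff j w * (of_nat n + D) powr (- w - of_nat (Suc j)))
    \<le> (real n + 8) powr (- Re w) * exp (\<bar>Im w\<bar> * pi / 2) * (2 ^ \<rho> / 2 * (1 / 2) ^ j)"
proof -
  let ?a = "(real n + 8) powr (- Re w) * exp (\<bar>Im w\<bar> * pi / 2)"
  have "norm ((of_nat n + D) powr (- w - of_nat (Suc j)))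
      \<le> (real n + 8) powr (- Re w - real (Suc j)) * exp (\<bar>Im w\<bar> * pi / 2)"
    using norm_powr_shift_le[OF D, of "- w - of_nat (Suc j)" n] w by simp
  also have "(real n + 8) powr (- Re w - real (Suc j)) = (real n + 8) powr (- Re w) / (real n + 8) ^ Suc j"
    by (simp add: powr_diff powr_realpow del: of_nat_Suc)
  also have "\<dots> \<le> (real n + 8) powr (- Re w) / 8 ^ Suc j"
    by (intro divide_left_mono power_mono mult_pos_pos) auto
  finally have "norm ((of_nat n + D) powr (- w - of_nat (Suc j))) \<le> ?a / 8 ^ Suc j"
    by (simp add: mult_right_mono)
  then have "norm (shift_coeff j w * (of_nat n + D) powr (- w - of_nat (Suc j)))
      \<le> (2 ^ \<rho> * 4 ^ Suc j) * (?a / 8 ^ Suc j)"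
    unfolding norm_mult by (intro mult_mono norm_shift_coeff_le w(2)) auto
  also have "\<dots> = ?a * (2 ^ \<rho> * (4 ^ Suc j / 8 ^ Suc j))" by (simp add: field_simps)
  also have "(4 :: real) ^ Suc j / 8 ^ Suc j = 1 / 2 * (1 / 2) ^ j"
    by (simp only: power_divide[symmetric]) simp
  finally show ?thesis by simp
qed

lemma hz_series_recursion:
  assumes D: "8 \<le> Re D" and w: "1 < Re w"
  shows "(\<lambda>j. shift_coeff j w * hz_series D (w + of_nat (Suc j))) sums (hz_pole D w - hz_series D w)"
proof -
  define g where "g n j = shift_coeff j w * (of_nat n + D) powr (- w - of_nat (Suc j))" for n j
  obtain \<rho> :: nat where \<rho>: "norm w \<le> real \<rho>" using real_arch_simple by blast
  define a where "a n = (real n + 8) powr (- Re w) * exp (\<bar>Im w\<bar> * pi / 2)" for n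
  define b where "b j = 2 ^ \<rho> / 2 * (1 / 2 :: real) ^ j" for j
  have "summable a" unfolding a_def using w by (intro summable_mult2 summable_shifted_powr) simp
  moreover have "summable b" unfolding b_def by (intro summable_mult summable_geometric) simp
  moreover have "0 \<le> a n" "0 \<le> b j" for n j by (simp_all add: a_def b_def)
  ultimately have swap: "(\<lambda>n. \<Sum>j. g n j) sums (\<Sum>j. \<Sum>n. g n j)" "summable (\<lambda>j. \<Sum>n. g n j)"
    using sums_swap_dominated[of g a b] norm_shift_term_powr_le[OF D w \<rho>] by (auto simp: g_def a_def b_def)
  have cols: "(\<Sum>n. g n j) = shift_coeff j w * hz_series D (w + of_nat (Suc j))" for j
  proof -
    have "- w - of_nat (Suc j) = - (w + of_nat (Suc j))" by simp
    moreover have "summable (\<lambda>n. (of_nat n + D) powr (- (w + of_nat (Suc j))))"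
      by (rule summable_hz_series[OF D]) (use w in simp)
    ultimately show ?thesis unfolding g_def hz_series_def by (simp only: suminf_mult)
  qed
  have rows: "(\<Sum>j. g n j) = hz_pole (of_nat n + D) w - hz_pole (of_nat (Suc n) + D) w - (of_nat n + D) powr (- w)"
    for n
  proof -
    have x: "1 < Re (of_nat n + D)" "w \<noteq> 1" "of_nat n + D + 1 = of_nat (Suc n) + D"
      using D w by auto
    from shift_coeff_sums[OF x(1,2)] show ?thesis
      unfolding g_def hz_pole_def x(3) by (rule sums_unique[symmetric])
  qed
  have "(\<lambda>n. hz_pole (of_nat n + D) w - hz_pole (of_nat (Suc n) + D) w) sums hz_pole D w"
    using telescope_sums'[OF hz_pole_shift_tendsto_0[OF D w]] by simp
  from sums_diff[OF this swap(1)]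
  have "(\<lambda>n. (of_nat n + D) powr (- w)) sums (hz_pole D w - (\<Sum>j. \<Sum>n. g n j))"
    by (simp add: rows)
  then have "hz_series D w = hz_pole D w - (\<Sum>j. \<Sum>n. g n j)"
    by (simp add: hz_series_def sums_iff)
  then show ?thesis using summable_sums[OF swap(2)] by (simp add: cols)
qed

section \<open>Analytic continuation\<close>

lemma shift_coeff_hz_pole:
  assumes "w + of_nat j \<noteq> 0"
  shows "shift_coeff j w * hz_pole D (w + of_nat (Suc j)) = pole_coeff j w * D powr (1 - w - of_nat (Suc j))"
proof -
  have field: "G * (- u) / a / b * (P / u) = - G / (a * b) * P"
    if "u \<noteq> 0" "a \<noteq> 0" "b \<noteq> 0" for G u a b P :: complex
    using that by (simp add: field_simps)
  have "shift_coeff j w = ((- w) gchoose j) * (- (w + of_nat j)) / of_nat (Suc j) / of_nat (Suc (Suc j))"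
    unfolding shift_coeff_def gbinomial_Suc_right by (simp add: algebra_simps)
  moreover have "hz_pole D (w + of_nat (Suc j)) = D powr (1 - w - of_nat (Suc j)) / (w + of_nat j)"
    by (simp add: hz_pole_def algebra_simps)
  moreover have "pole_coeff j w = - ((- w) gchoose j) / (of_nat (Suc j) * of_nat (Suc (Suc j)))"
    unfolding pole_coeff_def of_nat_mult ..
  ultimately show ?thesis
    using field[OF assms, of "of_nat (Suc j)" "of_nat (Suc (Suc j))"] by (simp del: of_nat_Suc)
qed

definition hz_step_term :: "complex \<Rightarrow> (complex \<Rightarrow> complex) \<Rightarrow> complex \<Rightarrow> nat \<Rightarrow> complex" where
  "hz_step_term D G w j =
     pole_coeff j w * D powr (1 - w - of_nat (Suc j)) + shift_coeff j w * G (w + of_nat (Suc j))"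

definition hz_step :: "complex \<Rightarrow> (complex \<Rightarrow> complex) \<Rightarrow> complex \<Rightarrow> complex" where
  "hz_step D G w = - (\<Sum>j. hz_step_term D G w j)"

text \<open>hz_rem_iter D m is the remainder only on Re w > 1 - m; further left its series may diverge
  and suminf returns junk.\<close>
primrec hz_rem_iter :: "complex \<Rightarrow> nat \<Rightarrow> complex \<Rightarrow> complex" where
  "hz_rem_iter D 0 = (\<lambda>w. hz_series D w - hz_pole D w)"
| "hz_rem_iter D (Suc m) = hz_step D (hz_rem_iter D m)"

definition hz_rem :: "complex \<Rightarrow> complex \<Rightarrow> complex" where
  "hz_rem D w = hz_rem_iter D (nat \<lceil>1 - Re w\<rceil> + 1) w"

definition hz_cont :: "complex \<Rightarrow> complex \<Rightarrow> complex" where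
  "hz_cont d w = (\<Sum>n<8. (of_nat n + d) powr (- w)) + hz_pole (d + 8) w + hz_rem (d + 8) w"

lemma hz_step_hz_rem_iter_0:
  assumes "8 \<le> Re D" and "1 < Re w"
  shows "hz_step D (hz_rem_iter D 0) w = hz_rem_iter D 0 w"
proof -
  have "w + of_nat j \<noteq> 0" for j
  proof -
    have "0 < Re (w + of_nat j)" using assms(2) by simp
    then show ?thesis by (metis less_irrefl zero_complex.sel(1))
  qed
  then have "hz_step_term D (hz_rem_iter D 0) w j = shift_coeff j w * hz_series D (w + of_nat (Suc j))" for j
    using shift_coeff_hz_pole[of w j D] by (simp add: hz_step_term_def algebra_simps)
  then show ?thesis
    using hz_series_recursion[OF assms] by (simp add: hz_step_def sums_iff)
qed

lemma hz_rem_iter_Suc: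
  assumes "8 \<le> Re D" and "1 - real m < Re w"
  shows "hz_rem_iter D (Suc m) w = hz_rem_iter D m w"
  using assms(2)
proof (induction m arbitrary: w)
  case 0
  then show ?case using hz_step_hz_rem_iter_0[OF assms(1), of w] by simp
next
  case (Suc m)
  then have "hz_rem_iter D (Suc m) (w + of_nat (Suc j)) = hz_rem_iter D m (w + of_nat (Suc j))" for j
    by simp
  then show ?case by (simp add: hz_step_def hz_step_term_def)
qed

lemma hz_rem_iter_mono_eq:
  assumes "8 \<le> Re D" and "1 - real m < Re w" and "m \<le> m'"
  shows "hz_rem_iter D m' w = hz_rem_iter D m w"
  using assms(3)
proof (induction m' rule: dec_induct)
  case (step k)
  then show ?case using hz_rem_iter_Suc[OF assms(1), of k w] assms(2) by simp
qed simp

lemma hz_rem_level: "1 - real (nat \<lceil>1 - Re w\<rceil> + 1) < Re w"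
  by linarith

lemma hz_rem_eq_iter:
  assumes "8 \<le> Re D" and "1 - real m < Re w"
  shows "hz_rem D w = hz_rem_iter D m w"
proof -
  define l where "l = nat \<lceil>1 - Re w\<rceil> + 1"
  have "hz_rem_iter D (max m l) w = hz_rem_iter D m w"
    by (rule hz_rem_iter_mono_eq[OF assms]) simp
  moreover have "hz_rem_iter D (max m l) w = hz_rem_iter D l w"
    by (rule hz_rem_iter_mono_eq[OF assms(1)]) (use hz_rem_level[of w] in \<open>auto simp: l_def\<close>)
  ultimately show ?thesis by (simp add: hz_rem_def l_def)
qed

lemma hz_rem_eq_series:
  assumes "8 \<le> Re D" and "1 < Re w"
  shows "hz_rem D w = hz_series D w - hz_pole D w"
  using hz_rem_eq_iter[OF assms(1), of 0 w] assms(2) by simp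

lemma hz_rem_step:
  assumes "8 \<le> Re D"
  shows "hz_rem D w = hz_step D (hz_rem D) w"
proof -
  define l where "l = nat \<lceil>1 - Re w\<rceil> + 1"
  have l: "1 - real l < Re w" unfolding l_def by (rule hz_rem_level)
  have "hz_rem_iter D l (w + of_nat (Suc j)) = hz_rem D (w + of_nat (Suc j))" for j
    by (rule hz_rem_eq_iter[OF assms, symmetric]) (use l in simp)
  then have "hz_step D (hz_rem_iter D l) w = hz_step D (hz_rem D) w"
    by (simp add: hz_step_def hz_step_term_def)
  moreover have "hz_rem D w = hz_rem_iter D (Suc l) w"
    by (rule hz_rem_eq_iter[OF assms]) (use l in simp)
  ultimately show ?thesis by simp
qed

lemma holomorphic_on_suminf_local_majorant:
  fixes f :: "nat \<Rightarrow> complex \<Rightarrow> complex"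
  assumes S: "open S" and hol: "\<And>i. f i holomorphic_on S"
    and majorant: "\<And>x. x \<in> S \<Longrightarrow> \<exists>e>0. cball x e \<subseteq> S \<and>
                (\<exists>M N. summable M \<and> (\<forall>i\<ge>N. \<forall>w\<in>cball x e. norm (f i w) \<le> M i))"
  shows "(\<lambda>w. \<Sum>i. f i w) holomorphic_on S"
proof (rule holomorphic_uniform_sequence[OF S])
  show "(\<lambda>w. \<Sum>i<n. f i w) holomorphic_on S" for n
    by (intro holomorphic_intros hol)
  fix x assume "x \<in> S"
  from majorant[OF this] obtain e M N where e: "0 < e" "cball x e \<subseteq> S" "summable M"
    and M: "\<And>i w. i \<ge> N \<Longrightarrow> w \<in> cball x e \<Longrightarrow> norm (f i w) \<le> M i" by blast
  have "uniform_limit (cball x e) (\<lambda>n w. \<Sum>i<n. f i w) (\<lambda>w. \<Sum>i. f i w) sequentially"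
    by (rule Weierstrass_m_test_ev[OF _ e(3)]) (unfold eventually_sequentially, use M in blast)
  with e show "\<exists>e>0. cball x e \<subseteq> S \<and> uniform_limit (cball x e) (\<lambda>n w. \<Sum>i<n. f i w) (\<lambda>w. \<Sum>i. f i w) sequentially"
    by blast
qed

lemma mem_cball_bounds:
  assumes "w \<in> cball x e"
  shows "Re x - e \<le> Re w" and "\<bar>Im w\<bar> \<le> \<bar>Im x\<bar> + e" and "norm w \<le> norm x + e"
proof -
  have n: "norm (w - x) \<le> e" using assms by (simp add: dist_norm norm_minus_commute)
  show "Re x - e \<le> Re w" using abs_Re_le_cmod[of "w - x"] n by simp
  show "\<bar>Im w\<bar> \<le> \<bar>Im x\<bar> + e" using abs_Im_le_cmod[of "w - x"] n by simp
  show "norm w \<le> norm x + e" using norm_triangle_ineq2[of w x] n by simp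
qed

lemma holomorphic_on_gbinomial:
  "f holomorphic_on A \<Longrightarrow> (\<lambda>w. f w gchoose j) holomorphic_on A"
  unfolding gbinomial_prod_rev by (intro holomorphic_intros) auto

lemma open_halfplane_Re_gt: "open {w :: complex. c < Re w}"
  by (intro open_Collect_less continuous_intros)

lemma holomorphic_hz_series:
  assumes D: "8 \<le> Re D"
  shows "hz_series D holomorphic_on {w. 1 < Re w}"
  unfolding hz_series_def[abs_def]
proof (rule holomorphic_on_suminf_local_majorant[OF open_halfplane_Re_gt])
  show "(\<lambda>w. (of_nat n + D) powr (- w)) holomorphic_on {w. 1 < Re w}" for n
    by (intro holomorphic_intros)
  fix x assume x: "x \<in> {w. 1 < Re w}"
  define e where "e = (Re x - 1) / 2"
  have e: "0 < e" "Re x - e = 1 + e" using x by (auto simp: e_def field_simps)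
  have sub: "cball x e \<subseteq> {w. 1 < Re w}"
    using mem_cball_bounds(1) e by fastforce
  define M where "M n = (real n + 8) powr (- (1 + e)) * exp ((\<bar>Im x\<bar> + e) * pi / 2)" for n
  have "summable M" unfolding M_def using e by (intro summable_mult2 summable_shifted_powr) simp
  moreover have "norm ((of_nat n + D) powr (- w)) \<le> M n" if w: "w \<in> cball x e" for n w
  proof -
    have "norm ((of_nat n + D) powr (- w)) \<le> (real n + 8) powr (- Re w) * exp (\<bar>Im w\<bar> * pi / 2)"
      using norm_powr_shift_le[OF D, of "- w" n] mem_cball_bounds(1)[OF w] e by simp
    also have "\<dots> \<le> M n" unfolding M_def
      using mem_cball_bounds(1,2)[OF w] e by (intro mult_mono powr_mono) auto
    finally show ?thesis .
  qed
  ultimately show "\<exists>e>0. cball x e \<subseteq> {w. 1 < Re w} \<and> (\<exists>M N. summable M \<and>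
      (\<forall>i\<ge>N. \<forall>w\<in>cball x e. norm ((of_nat i + D) powr (- w)) \<le> M i))"
    using e sub by blast
qed

lemma norm_D_powr_le:
  assumes D: "8 \<le> Re D" "norm D \<le> Dm" and w: "norm w \<le> real \<rho>"
  shows "norm (D powr (1 - w - of_nat (Suc j))) \<le> (Dm * exp (pi / 2)) ^ \<rho> * (1 / 8) ^ j"
proof -
  have nD: "8 \<le> norm D" using D complex_Re_le_cmod[of D] by linarith
  have Re: "- Re w \<le> \<rho>" and Im: "\<bar>Im w\<bar> \<le> \<rho>"
    using w abs_Re_le_cmod[of w] abs_Im_le_cmod[of w] by linarith+
  have "norm D powr real j = norm D ^ j" by (rule powr_realpow) (use nD in linarith)
  have "norm D powr (- Re w - real j) = norm D powr (- Re w) / norm D ^ j"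
    by (simp add: powr_diff \<open>norm D powr real j = norm D ^ j\<close>)
  also have "\<dots> \<le> Dm powr \<rho> / 8 ^ j"
    using nD D(2) by (intro frac_le order_trans[OF powr_mono[OF Re] powr_mono2] power_mono) auto
  also have "Dm powr \<rho> = Dm ^ \<rho>" by (rule powr_realpow) (use nD D(2) in linarith)
  finally have base: "norm D powr (- Re w - real j) \<le> Dm ^ \<rho> / 8 ^ j" .
  have exp: "exp (\<bar>Im w\<bar> * pi / 2) \<le> exp (pi / 2) ^ \<rho>"
    using Im by (simp add: exp_of_nat_mult[symmetric] mult_right_mono)
  have "norm (D powr (1 - w - of_nat (Suc j))) \<le> norm D powr (- Re w - real j) * exp (\<bar>Im w\<bar> * pi / 2)"
    using norm_powr_le_exp_Im[of D "1 - w - of_nat (Suc j)"] D by simp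
  also have "\<dots> \<le> Dm ^ \<rho> / 8 ^ j * exp (pi / 2) ^ \<rho>"
    by (rule mult_mono[OF base exp]) (use nD D(2) in auto)
  also have "\<dots> = (Dm * exp (pi / 2)) ^ \<rho> * (1 / 8) ^ j"
    by (simp add: power_mult_distrib power_one_over)
  finally show ?thesis .
qed

lemma norm_pole_term_le:
  assumes "8 \<le> Re D" and "norm D \<le> Dm" and "norm w \<le> real \<rho>"
  shows "norm (pole_coeff j w * D powr (1 - w - of_nat (Suc j))) \<le> (2 * Dm * exp (pi / 2)) ^ \<rho> * (1 / 2) ^ j"
proof -
  have "norm (pole_coeff j w * D powr (1 - w - of_nat (Suc j)))
      \<le> (2 ^ \<rho> * 4 ^ j) * ((Dm * exp (pi / 2)) ^ \<rho> * (1 / 8) ^ j)"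
    unfolding norm_mult by (intro mult_mono norm_pole_coeff_le norm_D_powr_le assms) auto
  also have "\<dots> = (2 ^ \<rho> * (Dm * exp (pi / 2)) ^ \<rho>) * (4 ^ j * (1 / 8) ^ j)"
    by (simp only: mult_ac)
  also have "\<dots> = (2 * Dm * exp (pi / 2)) ^ \<rho> * (1 / 2) ^ j"
    by (simp only: power_mult_distrib[symmetric]) (simp add: mult.assoc)
  finally show ?thesis .
qed

lemma norm_shift_term_le:
  assumes w: "norm w \<le> real \<rho>" and M: "0 \<le> M"
    and G: "norm (G (w + of_nat (Suc j))) \<le> M * 8 powr (- Re (w + of_nat (Suc j)))"
  shows "norm (shift_coeff j w * G (w + of_nat (Suc j))) \<le> M * 16 ^ \<rho> * (1 / 2) ^ j"
proof -
  have "- Re w \<le> \<rho>" using w abs_Re_le_cmod[of w] by linarith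
  then have "8 powr (- Re w) \<le> 8 ^ \<rho>"
    using powr_mono[of "- Re w" "real \<rho>" 8] by (simp add: powr_realpow)
  then have "8 powr (- Re (w + of_nat (Suc j))) \<le> 8 ^ \<rho> / 8 ^ Suc j"
    by (simp add: powr_diff powr_realpow divide_right_mono del: of_nat_Suc)
  then have "norm (G (w + of_nat (Suc j))) \<le> M * (8 ^ \<rho> / 8 ^ Suc j)"
    using order_trans[OF G mult_left_mono[OF _ M]] by blast
  then have "norm (shift_coeff j w * G (w + of_nat (Suc j))) \<le> (2 ^ \<rho> * 4 ^ Suc j) * (M * (8 ^ \<rho> / 8 ^ Suc j))"
    unfolding norm_mult using M by (intro mult_mono norm_shift_coeff_le w) auto
  also have "\<dots> = M * ((2 ^ \<rho> * 8 ^ \<rho>) * (4 ^ Suc j / 8 ^ Suc j))"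
    by (simp add: field_simps)
  also have "\<dots> = M * 16 ^ \<rho> * (1 / 2) ^ j / 2"
    by (simp only: power_mult_distrib[symmetric] power_divide[symmetric]) simp
  also have "\<dots> \<le> M * 16 ^ \<rho> * (1 / 2) ^ j"
    using M by simp
  finally show ?thesis .
qed

lemma norm_hz_step_term_le:
  assumes "8 \<le> Re D" and "norm D \<le> Dm" and "norm w \<le> real \<rho>" and "0 \<le> M"
    and "norm (G (w + of_nat (Suc j))) \<le> M * 8 powr (- Re (w + of_nat (Suc j)))"
  shows "norm (hz_step_term D G w j) \<le> ((2 * Dm * exp (pi / 2)) ^ \<rho> + M * 16 ^ \<rho>) * (1 / 2) ^ j"
proof -
  have "norm (hz_step_term D G w j)
      \<le> norm (pole_coeff j w * D powr (1 - w - of_nat (Suc j))) + norm (shift_coeff j w * G (w + of_nat (Suc j)))"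
    unfolding hz_step_term_def by (rule norm_triangle_ineq)
  also have "\<dots> \<le> (2 * Dm * exp (pi / 2)) ^ \<rho> * (1 / 2) ^ j + M * 16 ^ \<rho> * (1 / 2) ^ j"
    by (intro add_mono norm_pole_term_le[OF assms(1-3)] norm_shift_term_le[of w \<rho> M G j] assms)
  finally show ?thesis by (simp add: algebra_simps)
qed

lemma norm_hz_step_le:
  assumes "\<And>j. norm (hz_step_term D G w j) \<le> g j" and "g sums S"
  shows "norm (hz_step D G w) \<le> S"
  using norm_suminf_le[OF assms(1) sums_summable[OF assms(2)]] assms(2)
  by (simp add: hz_step_def sums_iff)

lemma sums_mult_half_power: "(\<lambda>j. c * (1 / 2 :: real) ^ j) sums (2 * c)"
  using sums_mult[OF geometric_sums[of "1 / 2 :: real"], of c] by (simp add: mult.commute)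

lemma norm_hz_pole_le:
  assumes D: "8 \<le> Re D" and u: "2 \<le> Re u"
  shows "norm (hz_pole D u) \<le> 8 * exp (\<bar>Im u\<bar> * pi / 2) * 8 powr (- Re u)"
proof -
  have nD: "8 \<le> norm D" using D complex_Re_le_cmod[of D] by linarith
  have "norm (D powr (1 - u)) \<le> norm D powr (1 - Re u) * exp (\<bar>Im u\<bar> * pi / 2)"
    using norm_powr_le_exp_Im[of D "1 - u"] D by simp
  also have "\<dots> \<le> 8 powr (1 - Re u) * exp (\<bar>Im u\<bar> * pi / 2)"
    by (intro mult_right_mono powr_mono2') (use u nD in auto)
  also have "8 powr (1 - Re u) = 8 * 8 powr (- Re u)" by (simp add: powr_diff powr_minus_divide)
  finally have "norm (D powr (1 - u)) \<le> 8 * exp (\<bar>Im u\<bar> * pi / 2) * 8 powr (- Re u)"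
    by (simp add: mult_ac)
  moreover have "1 \<le> norm (u - 1)" using abs_Re_le_cmod[of "u - 1"] u by simp
  then have "norm (D powr (1 - u)) / norm (u - 1) \<le> norm (D powr (1 - u))"
    by (simp add: divide_le_eq mult_le_cancel_left1)
  ultimately show ?thesis by (simp add: hz_pole_def norm_divide)
qed

lemma hz_series_minus_pole_bound:
  obtains K where "0 \<le> K"
    and "\<And>D u. 8 \<le> Re D \<Longrightarrow> 2 \<le> Re u \<Longrightarrow> \<bar>Im u\<bar> \<le> B \<Longrightarrow>
           norm (hz_series D u - hz_pole D u) \<le> K * 8 powr (- Re u)"
proof
  define S where "S = (\<Sum>n. (real n + 8) powr (-2))"
  have sum: "summable (\<lambda>n. (real n + 8) powr (-2))" using summable_shifted_powr[of 2] by simp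
  then have "0 \<le> S" unfolding S_def by (intro suminf_nonneg) auto
  then show "0 \<le> (64 * S + 8) * exp (B * pi / 2)" by simp
  fix D u assume D: "8 \<le> Re D" and u: "2 \<le> Re u" and B: "\<bar>Im u\<bar> \<le> B"
  let ?E = "exp (B * pi / 2)"
  have summand: "norm ((of_nat n + D) powr (- u)) \<le> (real n + 8) powr (-2) * (64 * ?E * 8 powr (- Re u))" for n
  proof -
    have "norm ((of_nat n + D) powr (- u)) \<le> (real n + 8) powr (- Re u) * exp (\<bar>Im u\<bar> * pi / 2)"
      using norm_powr_shift_le[OF D, of "- u" n] u by simp
    also have "\<dots> \<le> (real n + 8) powr (- Re u) * ?E"
      using B by (intro mult_left_mono) auto
    also have "(real n + 8) powr (- Re u) = (real n + 8) powr (-2) * (real n + 8) powr (- (Re u - 2))"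
      by (simp add: powr_add[symmetric])
    also have "(real n + 8) powr (- (Re u - 2)) \<le> 8 powr (- (Re u - 2))"
      by (rule powr_mono2') (use u in auto)
    also have "8 powr (- (Re u - 2)) = 64 * 8 powr (- Re u)"
      by (simp add: powr_add powr_diff powr_minus_divide)
    finally show ?thesis by (simp add: mult_ac mult_left_mono)
  qed
  have "norm (hz_series D u) \<le> S * (64 * ?E * 8 powr (- Re u))"
    using norm_suminf_le[OF summand summable_mult2[OF sum]] suminf_mult2[OF sum]
    by (simp add: hz_series_def S_def)
  moreover have "exp (\<bar>Im u\<bar> * pi / 2) \<le> ?E"
    using B by (intro exp_le_cancel_iff[THEN iffD2] divide_right_mono mult_right_mono) auto
  then have "norm (hz_pole D u) \<le> 8 * ?E * 8 powr (- Re u)"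
    using norm_hz_pole_le[OF D u] by (meson mult_left_mono mult_right_mono order_trans powr_ge_zero
        zero_le_numeral)
  ultimately show "norm (hz_series D u - hz_pole D u) \<le> (64 * S + 8) * ?E * 8 powr (- Re u)"
    using norm_triangle_ineq4[of "hz_series D u" "hz_pole D u"] by (simp add: algebra_simps)
qed

section \<open>The continuation is entire and equals the Hurwitz zeta function\<close>

lemma hz_step_term_majorant:
  assumes D: "8 \<le> Re D"
  obtains M where "summable M"
    and "\<And>j w. \<rho> + 1 \<le> j \<Longrightarrow> norm w \<le> real \<rho> \<Longrightarrow> norm (hz_step_term D (hz_rem_iter D m) w j) \<le> M j"
proof -
  obtain K where K: "0 \<le> K" and rem0: "\<And>D u. 8 \<le> Re D \<Longrightarrow> 2 \<le> Re u \<Longrightarrow> \<bar>Im u\<bar> \<le> real \<rho> \<Longrightarrow>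
      norm (hz_series D u - hz_pole D u) \<le> K * 8 powr (- Re u)"
    using hz_series_minus_pole_bound by blast
  define M where "M j = ((2 * norm D * exp (pi / 2)) ^ \<rho> + K * 16 ^ \<rho>) * (1 / 2) ^ j" for j :: nat
  have "summable M" unfolding M_def by (intro summable_mult summable_geometric) simp
  moreover have "norm (hz_step_term D (hz_rem_iter D m) w j) \<le> M j"
    if j: "\<rho> + 1 \<le> j" and nw: "norm w \<le> real \<rho>" for j w
  proof -
    have u: "2 \<le> Re (w + of_nat (Suc j))" "\<bar>Im (w + of_nat (Suc j))\<bar> \<le> real \<rho>"
      using abs_Re_le_cmod[of w] abs_Im_le_cmod[of w] nw j by auto
    have "hz_rem_iter D m (w + of_nat (Suc j)) = hz_rem_iter D 0 (w + of_nat (Suc j))"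
      by (rule hz_rem_iter_mono_eq[OF D]) (use u in auto)
    then have "norm (hz_rem_iter D m (w + of_nat (Suc j))) \<le> K * 8 powr (- Re (w + of_nat (Suc j)))"
      using rem0[OF D u] by (simp only: hz_rem_iter.simps)
    from norm_hz_step_term_le[where G = "hz_rem_iter D m", OF D order_refl nw K this]
    show ?thesis by (simp add: M_def)
  qed
  ultimately show ?thesis using that by blast
qed

lemma holomorphic_hz_rem_iter:
  assumes D: "8 \<le> Re D"
  shows "hz_rem_iter D m holomorphic_on {w. 1 - real m < Re w}"
proof (induction m)
  case 0
  have "hz_pole D holomorphic_on {w. 1 < Re w}"
    unfolding hz_pole_def[abs_def] by (intro holomorphic_intros) auto
  then show ?case using holomorphic_hz_series[OF D] by (simp add: holomorphic_on_diff)
next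
  case (Suc m)
  let ?S = "{w. 1 - real (Suc m) < Re w}"
  have "(\<lambda>w. \<Sum>j. hz_step_term D (hz_rem_iter D m) w j) holomorphic_on ?S"
  proof (rule holomorphic_on_suminf_local_majorant[OF open_halfplane_Re_gt])
    have "(\<lambda>w. hz_rem_iter D m (w + of_nat (Suc j))) holomorphic_on ?S" for j
      using holomorphic_on_compose_gen[of "\<lambda>w. w + of_nat (Suc j)" ?S "hz_rem_iter D m"] Suc.IH
      by (force simp: o_def intro: holomorphic_intros)
    then show "(\<lambda>w. hz_step_term D (hz_rem_iter D m) w j) holomorphic_on ?S" for j
      unfolding hz_step_term_def pole_coeff_def shift_coeff_def
      by (intro holomorphic_intros holomorphic_on_gbinomial) (auto simp del: of_nat_Suc of_nat_mult)
    fix x assume x: "x \<in> ?S"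
    define e where "e = (Re x + real m) / 2"
    have e: "0 < e" "e < Re x + real m" using x by (auto simp: e_def)
    have sub: "cball x e \<subseteq> ?S"
      using mem_cball_bounds(1) e by fastforce
    define \<rho> where "\<rho> = nat \<lceil>norm x + e\<rceil>"
    have "norm w \<le> real \<rho>" if "w \<in> cball x e" for w
      using mem_cball_bounds(3)[OF that] unfolding \<rho>_def by linarith
    moreover obtain M where "summable M" and "\<And>j w. \<rho> + 1 \<le> j \<Longrightarrow> norm w \<le> real \<rho> \<Longrightarrow>
        norm (hz_step_term D (hz_rem_iter D m) w j) \<le> M j"
      using hz_step_term_majorant[OF D] by blast
    ultimately show "\<exists>e>0. cball x e \<subseteq> ?S \<and> (\<exists>M N. summable M \<and>
        (\<forall>i\<ge>N. \<forall>w\<in>cball x e. norm (hz_step_term D (hz_rem_iter D m) w i) \<le> M i))"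
      using e sub by blast
  qed
  then show ?case by (simp add: hz_step_def[abs_def] holomorphic_on_minus)
qed

lemma holomorphic_hz_rem:
  assumes D: "8 \<le> Re D"
  shows "hz_rem D holomorphic_on UNIV"
  unfolding holomorphic_on_def
proof
  fix x :: complex
  define l where "l = nat \<lceil>1 - Re x\<rceil> + 1"
  have "hz_rem D holomorphic_on {w. 1 - real l < Re w}"
    by (rule holomorphic_transform[OF holomorphic_hz_rem_iter[OF D, of l]]) (use hz_rem_eq_iter[OF D] in auto)
  then have "hz_rem D field_differentiable (at x)"
    using hz_rem_level[of x] by (intro holomorphic_on_imp_differentiable_at[OF _ open_halfplane_Re_gt]) (auto simp: l_def)
  then show "hz_rem D field_differentiable (at x within UNIV)" by simp
qed

lemma suminf_eq_hz_cont:
  assumes d: "0 < Re d" and z: "1 < Re z"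
  shows "(\<Sum>n. (of_nat n + d) powr (- z)) = hz_cont d z"
proof -
  have D: "8 \<le> Re (d + 8)" using d by simp
  have "(\<lambda>n. (of_nat (n + 8) + d) powr (- z)) sums hz_series (d + 8) z"
    using summable_sums[OF summable_hz_series[OF D z]] by (simp add: hz_series_def add_ac)
  then have "(\<Sum>n. (of_nat n + d) powr (- z)) = hz_series (d + 8) z + (\<Sum>n<8. (of_nat n + d) powr (- z))"
    by (subst (asm) sums_iff_shift[where f = "\<lambda>n. (of_nat n + d) powr (- z)"]) (simp add: sums_iff)
  then show ?thesis using hz_rem_eq_series[OF D z] by (simp add: hz_cont_def)
qed

lemma holomorphic_hz_cont:
  assumes "0 < Re d"
  shows "hz_cont d holomorphic_on (UNIV - {1})"
  unfolding hz_cont_def[abs_def] hz_pole_def using holomorphic_hz_rem[of "d + 8"] assms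
  by (intro holomorphic_intros) (auto intro: holomorphic_on_subset)

lemma hurwitz_zeta_eq_hz_cont:
  assumes d: "0 < Re d" and "w \<noteq> 1"
  shows "hurwitz_zeta w d = hz_cont d w"
proof -
  define P where "P f \<longleftrightarrow> f holomorphic_on (UNIV - {1}) \<and> f 1 = 0 \<and>
      (\<forall>z. 1 < Re z \<longrightarrow> f z = (\<Sum>n. (of_nat n + d) powr (- z)))" for f
  define h where "h z = (if z = 1 then 0 else hz_cont d z)" for z
  have hol: "h holomorphic_on (UNIV - {1})"
    by (rule holomorphic_transform[OF holomorphic_hz_cont[OF d]]) (simp add: h_def)
  have "P h" using hol suminf_eq_hz_cont[OF d] by (simp add: P_def h_def)
  moreover have "g z = h z" if "P g" for g z
  proof (cases "z = 1")
    case True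
    then show ?thesis using \<open>P g\<close> by (simp add: P_def h_def)
  next
    case False
    have "open (UNIV - {1 :: complex})" by (simp add: open_Diff)
    moreover have "{z. 1 < Re z} \<noteq> {}" by (auto intro!: exI[of _ 2])
    moreover have "connected (- {1 :: complex})" by (rule connected_punctured_universe) simp
    then have "connected (UNIV - {1 :: complex})" by (simp add: Compl_eq_Diff_UNIV)
    moreover have "{z. 1 < Re z} \<subseteq> UNIV - {1 :: complex}" by auto
    moreover have "g holomorphic_on (UNIV - {1})" and "\<And>z. z \<in> {z. 1 < Re z} \<Longrightarrow> g z = h z"
      using \<open>P g\<close> suminf_eq_hz_cont[OF d] by (auto simp: P_def h_def)
    ultimately show ?thesis
      using analytic_continuation_open[OF open_halfplane_Re_gt _ _ _ _ _ hol] False by blast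
  qed
  ultimately have "(THE f. P f) = h" by (intro the_equality) auto
  then show ?thesis using assms(2) unfolding hurwitz_zeta_def P_def[symmetric] by (simp add: h_def)
qed

section \<open>Growth of the remainder to the left\<close>

lemma norm_hz_rem_le_step:
  assumes "8 \<le> Re D" and "norm D \<le> Dm" and "norm w \<le> real \<rho>" and "0 \<le> M"
    and "\<And>j. norm (hz_rem D (w + of_nat (Suc j))) \<le> M * 8 powr (- Re (w + of_nat (Suc j)))"
  shows "norm (hz_rem D w) \<le> 2 * ((2 * Dm * exp (pi / 2)) ^ \<rho> + M * 16 ^ \<rho>)"
  by (subst hz_rem_step[OF assms(1)])
     (rule norm_hz_step_le[OF norm_hz_step_term_le[where G = "hz_rem D", OF assms] sums_mult_half_power])

lemma hz_rem_strip_bound: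
  assumes "0 \<le> Dm"
  shows "\<exists>M\<ge>0. \<forall>D w. 8 \<le> Re D \<and> norm D \<le> Dm \<and> 2 - real i \<le> Re w \<and> \<bar>Im w\<bar> \<le> real r
           \<longrightarrow> norm (hz_rem D w) \<le> M * 8 powr (- Re w)"
proof (induction i)
  case 0
  obtain K where "0 \<le> K" and "\<And>D u. 8 \<le> Re D \<Longrightarrow> 2 \<le> Re u \<Longrightarrow> \<bar>Im u\<bar> \<le> real r \<Longrightarrow>
      norm (hz_series D u - hz_pole D u) \<le> K * 8 powr (- Re u)"
    using hz_series_minus_pole_bound by blast
  then show ?case using hz_rem_eq_series by (intro exI[of _ K]) auto
next
  case (Suc i)
  then obtain M where M0: "0 \<le> M" and M: "\<And>D w. 8 \<le> Re D \<Longrightarrow> norm D \<le> Dm \<Longrightarrow> 2 - real i \<le> Re w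
      \<Longrightarrow> \<bar>Im w\<bar> \<le> real r \<Longrightarrow> norm (hz_rem D w) \<le> M * 8 powr (- Re w)" by blast
  define \<rho> where "\<rho> = i + r + 2"
  define c where "c = (2 * Dm * exp (pi / 2)) ^ \<rho> + M * 16 ^ \<rho>"
  have "0 \<le> c" unfolding c_def using M0 assms by simp
  have "norm (hz_rem D w) \<le> max M (128 * c) * 8 powr (- Re w)"
    if D: "8 \<le> Re D" and nD: "norm D \<le> Dm" and Rw: "2 - real (Suc i) \<le> Re w"
      and Iw: "\<bar>Im w\<bar> \<le> real r" for D w
  proof (cases "2 - real i \<le> Re w")
    case True
    have "norm (hz_rem D w) \<le> M * 8 powr (- Re w)" by (rule M[OF D nD True Iw])
    also have "\<dots> \<le> max M (128 * c) * 8 powr (- Re w)" by (intro mult_right_mono) auto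
    finally show ?thesis .
  next
    case False
    have nw: "norm w \<le> real \<rho>" using cmod_le[of w] False Rw Iw by (simp add: \<rho>_def)
    have "norm (hz_rem D (w + of_nat (Suc j))) \<le> M * 8 powr (- Re (w + of_nat (Suc j)))" for j
      by (rule M[OF D nD]) (use Rw Iw in auto)
    then have "norm (hz_rem D w) \<le> 2 * c"
      unfolding c_def by (rule norm_hz_rem_le_step[OF D nD nw M0])
    also have "\<dots> \<le> 128 * c * 8 powr (- Re w)"
    proof -
      have "8 powr (-2) \<le> 8 powr (- Re w)" using False by (intro powr_mono) auto
      then have "1 / 64 \<le> 8 powr (- Re w)" by (simp add: powr_minus_divide)
      then have "128 * c * (1 / 64) \<le> 128 * c * 8 powr (- Re w)"
        using \<open>0 \<le> c\<close> by (intro mult_left_mono) auto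
      then show ?thesis by simp
    qed
    also have "\<dots> \<le> max M (128 * c) * 8 powr (- Re w)" by (intro mult_right_mono) auto
    finally show ?thesis .
  qed
  then show ?case using M0 by (intro exI[of _ "max M (128 * c)"]) auto
qed

lemma norm_shift_coeff_left_le:
  assumes s: "norm s \<le> real r" and j: "j < k"
  shows "norm (shift_coeff j (s - of_nat k)) * fact (k - Suc j + r) \<le> fact (k + r) / fact (j + 2)"
proof -
  have "norm ((of_nat k - s) gchoose Suc j) \<le> real ((k + r) choose Suc j)"
  proof (rule norm_gbinomial_le_binomial)
    fix i assume "i < Suc j"
    then have "i \<le> k" using j by simp
    have "norm (of_nat k - s - of_nat i) = norm (of_nat (k - i) - s)"
      using \<open>i \<le> k\<close> by (simp add: of_nat_diff algebra_simps)
    also have "\<dots> \<le> real (k - i) + norm s"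
      using norm_triangle_ineq4[of "of_nat (k - i)" s] by simp
    finally show "norm (of_nat k - s - of_nat i) \<le> real (k + r) - real i"
      using s \<open>i \<le> k\<close> by (simp add: of_nat_diff)
  qed (use j in simp)
  then have "norm (shift_coeff j (s - of_nat k)) \<le> real ((k + r) choose Suc j) / real (Suc (Suc j))"
    unfolding shift_coeff_def norm_divide by (simp add: divide_right_mono del: of_nat_Suc)
  moreover have "k - Suc j + r = k + r - Suc j" using j by simp
  then have "real ((k + r) choose Suc j) = fact (k + r) / (fact (Suc j) * fact (k - Suc j + r))"
    using binomial_fact[of "Suc j" "k + r"] j by simp
  moreover have "fact (j + 2) = real (Suc (Suc j)) * fact (Suc j)"
    by (simp only: numeral_2_eq_2 add_Suc_right add_0_right fact_Suc of_nat_Suc)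
  ultimately show ?thesis
    by (simp add: field_simps del: of_nat_Suc fact_Suc)
qed

lemma norm_shift_term_left_le:
  fixes MB C L :: real
  assumes s: "norm s \<le> real r" and MB: "0 \<le> MB" and C: "0 \<le> C" and L: "16 \<le> L"
    and IH: "\<And>i. i < k \<Longrightarrow> norm (G (s - of_nat i)) \<le> C * fact (i + r)"
    and strip: "\<And>l. 1 \<le> l \<Longrightarrow> norm (G (s + of_nat l)) \<le> MB * 8 powr (- Re (s + of_nat l))"
  shows "norm (shift_coeff j (s - of_nat k) * G (s - of_nat k + of_nat (Suc j)))
    \<le> MB * L ^ (k + r) * (1 / 2) ^ j + (if j < k then C * fact (k + r) / fact (j + 2) else 0)"
proof (cases "j < k")
  case True
  then have e: "s - of_nat k + of_nat (Suc j) = s - of_nat (k - Suc j)" by (simp add: of_nat_diff)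
  have "norm (G (s - of_nat k + of_nat (Suc j))) \<le> C * fact (k - Suc j + r)"
    unfolding e by (rule IH) (use True in simp)
  from mult_left_mono[OF this norm_ge_zero[of "shift_coeff j (s - of_nat k)"]]
  have "norm (shift_coeff j (s - of_nat k) * G (s - of_nat k + of_nat (Suc j)))
      \<le> C * (norm (shift_coeff j (s - of_nat k)) * fact (k - Suc j + r))"
    unfolding norm_mult by (metis mult.left_commute)
  also have "\<dots> \<le> C * (fact (k + r) / fact (j + 2))"
    using norm_shift_coeff_left_le[OF s True] C by (intro mult_left_mono) simp_all
  finally show ?thesis using True MB L by (simp add: add_increasing)
next
  case False
  have nw: "norm (s - of_nat k) \<le> real (k + r)" using norm_triangle_ineq4[of s "of_nat k"] s by simp
  have e: "s - of_nat k + of_nat (Suc j) = s + of_nat (Suc j - k)" using False by (simp add: of_nat_diff)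
  have "norm (G (s - of_nat k + of_nat (Suc j))) \<le> MB * 8 powr (- Re (s - of_nat k + of_nat (Suc j)))"
    unfolding e by (rule strip) (use False in simp)
  then have "norm (shift_coeff j (s - of_nat k) * G (s - of_nat k + of_nat (Suc j))) \<le> MB * 16 ^ (k + r) * (1 / 2) ^ j"
    by (rule norm_shift_term_le[OF nw MB])
  also have "\<dots> \<le> MB * L ^ (k + r) * (1 / 2) ^ j"
    using MB L by (intro mult_right_mono mult_left_mono power_mono) auto
  finally show ?thesis using False by simp
qed

lemma norm_hz_step_term_left_le:
  fixes MB C L :: real
  assumes s: "norm s \<le> real r" and D: "8 \<le> Re D" "norm D \<le> Dm" and MB: "0 \<le> MB" and C: "0 \<le> C"
    and L: "2 * Dm * exp (pi / 2) \<le> L" "16 \<le> L"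
    and IH: "\<And>i. i < k \<Longrightarrow> norm (hz_rem D (s - of_nat i)) \<le> C * fact (i + r)"
    and strip: "\<And>l. 1 \<le> l \<Longrightarrow> norm (hz_rem D (s + of_nat l)) \<le> MB * 8 powr (- Re (s + of_nat l))"
  shows "norm (hz_step_term D (hz_rem D) (s - of_nat k) j)
    \<le> (1 + MB) * L ^ (k + r) * (1 / 2) ^ j + (if j < k then C * fact (k + r) / fact (j + 2) else 0)"
proof -
  let ?w = "s - of_nat k"
  have nw: "norm ?w \<le> real (k + r)" using norm_triangle_ineq4[of s "of_nat k"] s by simp
  have "0 \<le> Dm" using D(2) norm_ge_zero[of D] by linarith
  then have "(2 * Dm * exp (pi / 2)) ^ (k + r) \<le> L ^ (k + r)"
    by (intro power_mono L(1)) auto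
  then have "norm (pole_coeff j ?w * D powr (1 - ?w - of_nat (Suc j))) \<le> L ^ (k + r) * (1 / 2) ^ j"
    using order_trans[OF norm_pole_term_le[OF D nw, of j] mult_right_mono] by simp
  moreover have "norm (shift_coeff j ?w * hz_rem D (?w + of_nat (Suc j)))
      \<le> MB * L ^ (k + r) * (1 / 2) ^ j + (if j < k then C * fact (k + r) / fact (j + 2) else 0)"
    by (rule norm_shift_term_left_le[OF s MB C L(2) IH strip])
  moreover have "norm (hz_step_term D (hz_rem D) ?w j)
      \<le> norm (pole_coeff j ?w * D powr (1 - ?w - of_nat (Suc j))) + norm (shift_coeff j ?w * hz_rem D (?w + of_nat (Suc j)))"
    unfolding hz_step_term_def by (rule norm_triangle_ineq)
  ultimately show ?thesis by (simp add: algebra_simps)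
qed

text \<open>C is large enough that the terms with j >= k contribute at most C (k+r)!/4.\<close>
lemma hz_rem_left_bound:
  fixes Dm MB :: real and s D :: complex
  assumes MB: "0 \<le> MB"
  defines "C \<equiv> 8 * (1 + MB) * exp (max (2 * Dm * exp (pi / 2)) 16)"
  assumes s: "norm s \<le> real r" and D: "8 \<le> Re D" "norm D \<le> Dm"
    and strip: "\<And>l. 1 \<le> l \<Longrightarrow> norm (hz_rem D (s + of_nat l)) \<le> MB * 8 powr (- Re (s + of_nat l))"
  shows "norm (hz_rem D (s - of_nat k)) \<le> C * fact (k + r)"
proof (induction k rule: less_induct)
  case (less k)
  define L where "L = max (2 * Dm * exp (pi / 2)) 16"
  have L: "2 * Dm * exp (pi / 2) \<le> L" "16 \<le> L" by (simp_all add: L_def)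
  have C: "0 \<le> C" unfolding C_def using MB by simp
  let ?S = "\<Sum>j<k. C * fact (k + r) / fact (j + 2)"
  have "(\<lambda>j. (1 + MB) * L ^ (k + r) * (1 / 2) ^ j + (if j < k then C * fact (k + r) / fact (j + 2) else 0))
      sums (2 * ((1 + MB) * L ^ (k + r)) + ?S)"
  proof (rule sums_add[OF sums_mult_half_power])
    have "(\<Sum>j<k. if j < k then C * fact (k + r) / fact (j + 2) else 0) = ?S" by (rule sum.cong) auto
    then show "(\<lambda>j. if j < k then C * fact (k + r) / fact (j + 2) else 0) sums ?S"
      using sums_finite[of "{..<k}" "\<lambda>j. if j < k then C * fact (k + r) / fact (j + 2) else 0"] by simp
  qed
  then have "norm (hz_rem D (s - of_nat k)) \<le> 2 * ((1 + MB) * L ^ (k + r)) + ?S"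
    by (subst hz_rem_step[OF D(1)])
       (rule norm_hz_step_le[OF norm_hz_step_term_left_le[OF s D MB C L less strip]])
  moreover have "?S = C * fact (k + r) * (\<Sum>j<k. 1 / fact (j + 2))"
    by (simp add: sum_distrib_left)
  moreover have "\<dots> \<le> C * fact (k + r) * (3 / 4)"
    using C by (intro mult_left_mono sum_inverse_fact_Suc_Suc_le) simp
  moreover have "L ^ (k + r) \<le> exp L * fact (k + r)" by (rule pow_le_exp_mult_fact) (simp add: L_def)
  then have "2 * ((1 + MB) * L ^ (k + r)) \<le> C * fact (k + r) / 4"
    using mult_left_mono[of "L ^ (k + r)" "exp L * fact (k + r)" "2 * (1 + MB)"] MB
    by (simp add: C_def L_def algebra_simps)
  ultimately show ?case by linarith
qed

lemma norm_sum_shifted_powr_le: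
  fixes d s :: complex
  assumes d: "0 < Re d" "1 / b \<le> Re d" "norm d + real N \<le> b" and b: "1 \<le> b" and s: "norm s \<le> real r"
  shows "norm (\<Sum>n<N. (of_nat n + d) powr (of_nat k - s)) \<le> N * (b ^ (k + r) * exp (real r * pi / 2))"
proof -
  have bound: "norm ((of_nat n + d) powr (of_nat k - s)) \<le> b ^ (k + r) * exp (real r * pi / 2)"
    if "n < N" for n
  proof (rule norm_powr_nat_minus_le)
    show "1 / b \<le> norm (of_nat n + d)"
      using d(2) complex_Re_le_cmod[of "of_nat n + d"] by simp
    show "norm (of_nat n + d) \<le> b"
      using norm_triangle_ineq[of "of_nat n" d] d(3) that by simp
  qed (use d b s in auto)
  have "(\<Sum>n<N. norm ((of_nat n + d) powr (of_nat k - s))) \<le> (\<Sum>n<N. b ^ (k + r) * exp (real r * pi / 2))"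
    by (rule sum_mono) (use bound in simp)
  then show ?thesis
    using norm_sum[of "\<lambda>n. (of_nat n + d) powr (of_nat k - s)" "{..<N}"] by simp
qed

lemma norm_hz_pole_nat_minus_le:
  assumes D: "8 \<le> Re D" "norm D \<le> b" and b: "1 \<le> b" and s: "norm s \<le> real r"
    and sep: "0 < \<delta>" "\<delta> \<le> norm (s - of_nat (Suc k))"
  shows "norm (hz_pole D (s - of_nat k)) \<le> b ^ (Suc k + r) * exp (real r * pi / 2) / \<delta>"
proof -
  have "norm (D powr (of_nat (Suc k) - s)) \<le> b ^ (Suc k + r) * exp (real r * pi / 2)"
  proof (rule norm_powr_nat_minus_le)
    have "1 / b \<le> 1" using b by simp
    then show "1 / b \<le> norm D" using D(1) complex_Re_le_cmod[of D] by linarith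
  qed (use D b s in auto)
  moreover have "\<delta> \<le> norm (s - of_nat k - 1)" using sep(2) by (simp add: algebra_simps)
  ultimately have "norm (D powr (of_nat (Suc k) - s)) / norm (s - of_nat k - 1)
      \<le> b ^ (Suc k + r) * exp (real r * pi / 2) / \<delta>"
    using sep(1) b by (intro frac_le) auto
  then show ?thesis by (simp add: hz_pole_def norm_divide algebra_simps)
qed

lemma norm_hz_cont_nat_minus_le:
  fixes b MB \<delta> :: real and d s :: complex
  assumes b: "1 \<le> b" and MB: "0 \<le> MB" and \<delta>: "0 < \<delta>"
    and d: "0 < Re d" "1 / b \<le> Re d" "norm d + 8 \<le> b"
    and s: "norm s \<le> real r" and sep: "\<delta> \<le> norm (s - of_nat (Suc k))"
    and strip: "\<And>w. 2 - real (r + 1) \<le> Re w \<Longrightarrow> \<bar>Im w\<bar> \<le> real r \<Longrightarrow>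
      norm (hz_rem (d + 8) w) \<le> MB * 8 powr (- Re w)"
  defines "E \<equiv> exp (real r * pi / 2)" and "C \<equiv> 8 * (1 + MB) * exp (max (2 * b * exp (pi / 2)) 16)"
  shows "norm (hz_cont d (s - of_nat k)) \<le> ((8 + b / \<delta>) * E * exp b + C) * fact (k + r)"
proof -
  have D: "8 \<le> Re (d + 8)" "norm (d + 8) \<le> b"
    using d norm_triangle_ineq[of d 8] by auto
  have "norm (hz_cont d (s - of_nat k)) \<le> 8 * (b ^ (k + r) * E) + b ^ (Suc k + r) * E / \<delta> + C * fact (k + r)"
    unfolding hz_cont_def minus_diff_eq
  proof (intro order_trans[OF norm_triangle_ineq] add_mono order_trans[OF norm_triangle_ineq])
    have "norm d + real 8 \<le> b" using d(3) by simp
    from norm_sum_shifted_powr_le[OF d(1,2) this b s, of k]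
    show "norm (\<Sum>n<8. (of_nat n + d) powr (of_nat k - s)) \<le> 8 * (b ^ (k + r) * E)"
      by (simp add: E_def)
    show "norm (hz_pole (d + 8) (s - of_nat k)) \<le> b ^ (Suc k + r) * E / \<delta>"
      unfolding E_def by (rule norm_hz_pole_nat_minus_le[OF D b s \<delta> sep])
    show "norm (hz_rem (d + 8) (s - of_nat k)) \<le> C * fact (k + r)"
      unfolding C_def using s abs_Re_le_cmod[of s] abs_Im_le_cmod[of s]
      by (intro hz_rem_left_bound[OF MB s D] strip) auto
  qed
  also have "\<dots> = (8 + b / \<delta>) * E * b ^ (k + r) + C * fact (k + r)"
    using \<delta> by (simp add: field_simps)
  also have "\<dots> \<le> ((8 + b / \<delta>) * E * exp b + C) * fact (k + r)"
    using mult_left_mono[OF pow_le_exp_mult_fact[of b "k + r"], of "(8 + b / \<delta>) * E"] \<delta> b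
    by (simp add: E_def algebra_simps)
  finally show ?thesis .
qed

lemma hurwitz_zeta_bound_fact:
  fixes \<delta> r' :: real and r :: nat
  assumes "0 < \<delta>" and "1 < r'"
  obtains K where "0 \<le> K" and "\<And>d s k. 1 / r' \<le> Re d \<Longrightarrow> cmod d \<le> r' \<Longrightarrow> s \<in> Dbar \<delta> r \<Longrightarrow>
      cmod (hurwitz_zeta (s - of_nat k) d) \<le> K * fact (k + r)"
proof -
  define b where "b = r' + 8"
  have b: "1 \<le> b" "1 / b \<le> 1 / r'" using assms(2) by (auto simp: b_def intro!: divide_left_mono)
  obtain MB where MB0: "0 \<le> MB" and MB: "\<And>D w. 8 \<le> Re D \<and> norm D \<le> b \<and> 2 - real (r + 1) \<le> Re w
      \<and> \<bar>Im w\<bar> \<le> real r \<longrightarrow> norm (hz_rem D w) \<le> MB * 8 powr (- Re w)"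
    using hz_rem_strip_bound[of b "r + 1" r] b by auto
  define K where "K = (8 + b / \<delta>) * exp (real r * pi / 2) * exp b + 8 * (1 + MB) * exp (max (2 * b * exp (pi / 2)) 16)"
  have "cmod (hurwitz_zeta (s - of_nat k) d) \<le> K * fact (k + r)"
    if d: "1 / r' \<le> Re d" "cmod d \<le> r'" and "s \<in> Dbar \<delta> r" for d s k
  proof -
    have s: "norm s \<le> real r" and sep: "\<delta> \<le> norm (s - of_nat (Suc k))"
      using \<open>s \<in> Dbar \<delta> r\<close> unfolding Dbar_def by auto
    have "0 < 1 / r'" using assms(2) by simp
    then have Re_d: "0 < Re d" "1 / b \<le> Re d" using d(1) b(2) by linarith+
    have "norm (d + 8) \<le> b" using norm_triangle_ineq[of d 8] d(2) by (simp add: b_def)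
    have "s - of_nat k \<noteq> 1" using sep assms(1) by (auto simp: algebra_simps)
    then have "hurwitz_zeta (s - of_nat k) d = hz_cont d (s - of_nat k)"
      by (rule hurwitz_zeta_eq_hz_cont[OF Re_d(1)])
    also have "norm \<dots> \<le> K * fact (k + r)"
      unfolding K_def using d(2) MB \<open>norm (d + 8) \<le> b\<close> Re_d
      by (intro norm_hz_cont_nat_minus_le[OF b(1) MB0 assms(1) Re_d _ s sep]) (auto simp: b_def)
    finally show ?thesis .
  qed
  moreover have "0 \<le> K" using assms MB0 b by (simp add: K_def)
  ultimately show ?thesis using that by blast
qed

lemma fact_add_le_growth:
  fixes K r' :: real
  assumes "0 \<le> K"
  shows "K * fact (k + r)
    \<le> (K * fact r + 1) * (exp 2 / (2 * pi)) ^ k * fact k * (real k + 1) ^ (r + 1) * (1 + r' ^ (2 * k))"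
proof -
  let ?P = "(exp 2 / (2 * pi)) ^ k * (real k + 1) * (1 + r' ^ (2 * k))"
  let ?X = "(K * fact r + 1) * (real k + 1) ^ r * fact k"
  have "1 \<le> (exp 2 / (2 * pi)) ^ k" using two_pi_le_exp_2 by (intro one_le_power) simp
  moreover have "0 \<le> r' ^ (2 * k)" by (simp add: power_mult)
  ultimately have "1 * 1 * 1 \<le> ?P" by (intro mult_mono) auto
  then have "?X \<le> ?X * ?P" using mult_left_mono[of 1 ?P ?X] assms by simp
  moreover have "K * fact (k + r) \<le> K * (fact r * real (k + 1) ^ r * fact k)"
    by (rule mult_left_mono[OF fact_add_le assms])
  moreover have "K * (fact r * real (k + 1) ^ r * fact k) \<le> ?X"
    by (simp add: algebra_simps)
  moreover have "?X * ?P = (K * fact r + 1) * (exp 2 / (2 * pi)) ^ k * fact k * (real k + 1) ^ (r + 1) * (1 + r' ^ (2 * k))"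
    by (simp add: mult_ac)
  ultimately show ?thesis by linarith
qed

theorem lemma4p6:
  fixes \<delta> r' :: real and r :: nat
  assumes "\<delta> > 0" and "r \<ge> 1" and "r' > 1"
  shows "\<exists>C>0. \<forall>d s k. 1 / r' \<le> Re d \<and> cmod d \<le> r' \<and> s \<in> Dbar \<delta> r \<longrightarrow>
           cmod (hurwitz_zeta (s - of_nat k) d)
             \<le> C * (exp 2 / (2 * pi)) ^ k * fact k * (real k + 1) ^ (r + 1) * (1 + r' ^ (2 * k))"
proof -
  obtain K where K: "0 \<le> K" and bound: "\<And>d s k. 1 / r' \<le> Re d \<Longrightarrow> cmod d \<le> r' \<Longrightarrow> s \<in> Dbar \<delta> r \<Longrightarrow>
      cmod (hurwitz_zeta (s - of_nat k) d) \<le> K * fact (k + r)"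
    using hurwitz_zeta_bound_fact[OF assms(1,3)] by blast
  have "0 < K * fact r + 1" using K by (simp add: add_nonneg_pos)
  moreover have "cmod (hurwitz_zeta (s - of_nat k) d)
      \<le> (K * fact r + 1) * (exp 2 / (2 * pi)) ^ k * fact k * (real k + 1) ^ (r + 1) * (1 + r' ^ (2 * k))"
    if "1 / r' \<le> Re d" "cmod d \<le> r'" "s \<in> Dbar \<delta> r" for d s k
    using order_trans[OF bound[OF that] fact_add_le_growth[OF K]] .
  ultimately show ?thesis by blast
qed

end
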